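(* Let $G=(N,A)$ be a compressed $s$-$t$ DAG and let $u,v\in N$ be distinct nodes. If $u$ is the immediate $s$-dominator of $v$ and $v$ is the immediate $t$-dominator of $u$, then $u$ is the immediate $s$-dominator of some node different from $v$, and $v$ is the immediate $t$-dominator of some node different from $u$.
   Context: An $s$-$t$ DAG is a directed acyclic graph with a unique source $s$ and a unique sink $t$ such that every node is reachable from $s$ and every node reaches $t$. A unitary path is a path in which every node other than the first has indegree exactly one and every node other than the last has outdegree exactly one. The DAG is compressed if it has no unitary path with two or more nodes (equivalently, no arc $xy$ such that $y$ is the only out-neighbour of $x$ and $x$ is the only in-neighbour of $y$). A node $a$ $s$-dominates $b$ if every $s$-$b$ path contains $a$ (strictly if $a\neq b$); $a$ $t$-dominates $b$ if every $b$-$t$ path contains $a$. For $b\neq s$, the immediate $s$-dominator of $b$ is the strict $s$-dominator of $b$ that is $s$-dominated by all strict $s$-dominators of $b$; immediate $t$-dominators are defined symmetrically. *)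

theory Defs
  imports Main
begin

definition is_path :: "('a \<times> 'a) set \<Rightarrow> 'a list \<Rightarrow> bool" where
  "is_path A p \<longleftrightarrow> p \<noteq> [] \<and> (\<forall>i. Suc i < length p \<longrightarrow> (p ! i, p ! Suc i) \<in> A)"

definition in_nbrs :: "('a \<times> 'a) set \<Rightarrow> 'a \<Rightarrow> 'a set" where
  "in_nbrs A y = {x. (x, y) \<in> A}"

definition out_nbrs :: "('a \<times> 'a) set \<Rightarrow> 'a \<Rightarrow> 'a set" where
  "out_nbrs A x = {y. (x, y) \<in> A}"

definition st_dag :: "'a set \<Rightarrow> ('a \<times> 'a) set \<Rightarrow> 'a \<Rightarrow> 'a \<Rightarrow> bool" where
  "st_dag N A s t \<longleftrightarrow>
     finite N \<and> A \<subseteq> N \<times> N \<and> acyclic A \<and> s \<in> N \<and> t \<in> N \<and>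
     {x \<in> N. in_nbrs A x = {}} = {s} \<and>
     {x \<in> N. out_nbrs A x = {}} = {t} \<and>
     (\<forall>x \<in> N. (s, x) \<in> A\<^sup>* \<and> (x, t) \<in> A\<^sup>*)"

definition compressed :: "('a \<times> 'a) set \<Rightarrow> bool" where
  "compressed A \<longleftrightarrow>
     \<not> (\<exists>x y. (x, y) \<in> A \<and> out_nbrs A x = {y} \<and> in_nbrs A y = {x})"

definition s_dom :: "('a \<times> 'a) set \<Rightarrow> 'a \<Rightarrow> 'a \<Rightarrow> 'a \<Rightarrow> bool" where
  "s_dom A s a b \<longleftrightarrow> (\<forall>p. is_path A p \<and> hd p = s \<and> last p = b \<longrightarrow> a \<in> set p)"

definition t_dom :: "('a \<times> 'a) set \<Rightarrow> 'a \<Rightarrow> 'a \<Rightarrow> 'a \<Rightarrow> bool" where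
  "t_dom A t a b \<longleftrightarrow> (\<forall>p. is_path A p \<and> hd p = b \<and> last p = t \<longrightarrow> a \<in> set p)"

definition imm_s_dom :: "'a set \<Rightarrow> ('a \<times> 'a) set \<Rightarrow> 'a \<Rightarrow> 'a \<Rightarrow> 'a \<Rightarrow> bool" where
  "imm_s_dom N A s u v \<longleftrightarrow>
     u \<in> N \<and> v \<in> N \<and> v \<noteq> s \<and> u \<noteq> v \<and> s_dom A s u v \<and>
     (\<forall>w \<in> N. w \<noteq> v \<and> s_dom A s w v \<longrightarrow> s_dom A s w u)"

definition imm_t_dom :: "'a set \<Rightarrow> ('a \<times> 'a) set \<Rightarrow> 'a \<Rightarrow> 'a \<Rightarrow> 'a \<Rightarrow> bool" where
  "imm_t_dom N A t u v \<longleftrightarrow>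
     u \<in> N \<and> v \<in> N \<and> v \<noteq> t \<and> u \<noteq> v \<and> t_dom A t u v \<and>
     (\<forall>w \<in> N. w \<noteq> v \<and> t_dom A t w v \<longrightarrow> t_dom A t w u)"

end

theory Submission
  imports Defs
begin

text \<open>If the arc \<open>u \<rightarrow> v\<close> were the only arc leaving \<open>u\<close>, compression would give an
  in-neighbour \<open>x \<noteq> u\<close> of \<open>v\<close>; an \<open>s\<close>-\<open>x\<close> path followed by \<open>x \<rightarrow> v\<close> must pass \<open>u\<close>, and from \<open>u\<close>
  it can only continue through \<open>v\<close>, closing a cycle \<open>v \<rightarrow>\<^sup>+ x \<rightarrow> v\<close>. So \<open>u\<close> has a successor
  \<open>y \<noteq> v\<close>. Every path from \<open>y\<close> to \<open>t\<close> meets \<open>v\<close> (as \<open>v\<close> \<open>t\<close>-dominates \<open>u\<close>) and, by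
  acyclicity, avoids \<open>u\<close>; so an \<open>s\<close>-\<open>y\<close> path avoiding \<open>u\<close> would extend to an \<open>s\<close>-\<open>v\<close> path
  avoiding \<open>u\<close>. Thus \<open>u\<close> \<open>s\<close>-dominates \<open>y\<close>, and being an in-neighbour of \<open>y\<close> it is
  \<open>s\<close>-dominated by every strict \<open>s\<close>-dominator of \<open>y\<close>. The claim for \<open>t\<close>-dominators is the
  same statement for the reversed DAG.\<close>

lemma is_path_iff_successively:
  "is_path A p \<longleftrightarrow> p \<noteq> [] \<and> successively (\<lambda>x y. (x, y) \<in> A) p"
  by (simp add: is_path_def successively_conv_nth)

lemma is_path_singleton [simp]: "is_path A [x]"
  by (simp add: is_path_iff_successively)

lemma is_path_Cons:
  "is_path A (x # p) \<longleftrightarrow> p = [] \<or> (x, hd p) \<in> A \<and> is_path A p"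
  by (auto simp: is_path_iff_successively successively_Cons)

lemma is_path_snoc:
  assumes "is_path A p" and "(last p, y) \<in> A"
  shows "is_path A (p @ [y])"
  using assms by (auto simp: is_path_iff_successively successively_append_iff)

lemma is_path_join:
  assumes p: "is_path A p" and q: "is_path A q" and pq: "last p = hd q"
  shows "is_path A (butlast p @ q)" and "hd (butlast p @ q) = hd p"
proof -
  have p_split: "p = butlast p @ [hd q]"
    using p pq by (metis append_butlast_last_id is_path_def)
  have "successively (\<lambda>x y. (x, y) \<in> A) (butlast p @ [hd q])"
    using p p_split by (metis is_path_iff_successively)
  moreover from q have "q \<noteq> []" "successively (\<lambda>x y. (x, y) \<in> A) q"
    by (simp_all add: is_path_iff_successively)
  ultimately show "is_path A (butlast p @ q)"
    unfolding is_path_iff_successively successively_append_iff by simp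
  from arg_cong[OF p_split, of hd] show "hd (butlast p @ q) = hd p"
    by (cases "butlast p") simp_all
qed

lemma is_path_converse: "is_path (A\<inverse>) p \<longleftrightarrow> is_path A (rev p)"
  by (simp add: is_path_iff_successively)

lemma is_path_hd_reaches:
  "is_path A p \<Longrightarrow> x \<in> set p \<Longrightarrow> (hd p, x) \<in> A\<^sup>*"
proof (induction p)
  case (Cons y p)
  then show ?case
    by (cases "x = y") (auto simp: is_path_Cons intro: converse_rtrancl_into_rtrancl)
qed simp

lemma is_path_reaches_last:
  assumes "is_path A p" and "x \<in> set p"
  shows "(x, last p) \<in> A\<^sup>*"
proof -
  have "(last p, x) \<in> (A\<inverse>)\<^sup>*"
    using is_path_hd_reaches[of "A\<inverse>" "rev p"] assms by (simp add: is_path_converse hd_rev)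
  then show ?thesis
    by (simp add: rtrancl_converse)
qed

lemma rtrancl_imp_is_path:
  "(x, y) \<in> A\<^sup>* \<Longrightarrow> \<exists>p. is_path A p \<and> hd p = x \<and> last p = y"
proof (induction rule: converse_rtrancl_induct)
  case base
  show ?case by (intro exI[of _ "[y]"]) simp
next
  case (step a b)
  then obtain p where "is_path A p" "hd p = b" "last p = y" by blast
  moreover from \<open>is_path A p\<close> have "p \<noteq> []" by (simp add: is_path_def)
  ultimately show ?case
    using step by (intro exI[of _ "a # p"]) (simp add: is_path_Cons)
qed

lemma is_path_prefix_to:
  "is_path A p \<Longrightarrow> z \<in> set p \<Longrightarrow> \<exists>q. is_path A q \<and> hd q = hd p \<and> last q = z \<and> set q \<subseteq> set p"
proof (induction p)
  case (Cons x p)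
  show ?case
  proof (cases "z = x")
    case True
    then show ?thesis by (intro exI[of _ "[x]"]) simp
  next
    case False
    with Cons.prems have "p \<noteq> []" "(x, hd p) \<in> A" "is_path A p" "z \<in> set p"
      by (auto simp: is_path_Cons)
    with Cons.IH obtain q where q: "is_path A q" "hd q = hd p" "last q = z" "set q \<subseteq> set p"
      by blast
    then have "q \<noteq> []" by (simp add: is_path_def)
    with q \<open>(x, hd p) \<in> A\<close> show ?thesis
      by (intro exI[of _ "x # q"]) (auto simp: is_path_Cons)
  qed
qed simp

lemma t_dom_iff_s_dom_converse: "t_dom A t a b \<longleftrightarrow> s_dom (A\<inverse>) t a b"
  unfolding t_dom_def s_dom_def
  by (metis hd_rev last_rev is_path_converse rev_rev_ident set_rev)

lemma imm_t_dom_iff_imm_s_dom_converse: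
  "imm_t_dom N A t u v \<longleftrightarrow> imm_s_dom N (A\<inverse>) t u v"
  unfolding imm_t_dom_def imm_s_dom_def t_dom_iff_s_dom_converse ..

lemma st_dag_converse:
  assumes "st_dag N A s t"
  shows "st_dag N (A\<inverse>) t s"
proof -
  have "in_nbrs (A\<inverse>) = out_nbrs A" and "out_nbrs (A\<inverse>) = in_nbrs A"
    unfolding in_nbrs_def out_nbrs_def by auto
  moreover have "A\<inverse> \<subseteq> N \<times> N"
    using assms unfolding st_dag_def by blast
  ultimately show ?thesis
    using assms unfolding st_dag_def by (simp add: rtrancl_converse)
qed

lemma compressed_converse: "compressed A \<Longrightarrow> compressed (A\<inverse>)"
  unfolding compressed_def in_nbrs_def out_nbrs_def by auto

lemma s_dom_arc_source:
  assumes "(x, y) \<in> A" and "s_dom A s w y" and "w \<noteq> y"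
  shows "s_dom A s w x"
  unfolding s_dom_def
proof (intro allI impI)
  fix p
  assume p: "is_path A p \<and> hd p = s \<and> last p = x"
  then have "p \<noteq> []" by (simp add: is_path_def)
  with p assms(1) have "is_path A (p @ [y])" "hd (p @ [y]) = s" "last (p @ [y]) = y"
    by (simp_all add: is_path_snoc)
  with assms(2,3) show "w \<in> set p"
    unfolding s_dom_def by fastforce
qed

lemma s_dom_has_other_successor:
  assumes G: "st_dag N A s t" and C: "compressed A"
    and uv: "s_dom A s u v" "u \<noteq> v" and u: "u \<in> N" "u \<noteq> t"
  shows "\<exists>y. (u, y) \<in> A \<and> y \<noteq> v"
proof (rule ccontr)
  assume "\<not> ?thesis"
  moreover have "out_nbrs A u \<noteq> {}"
    using G u unfolding st_dag_def by blast
  ultimately have out_u: "out_nbrs A u = {v}"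
    unfolding out_nbrs_def by auto
  then have "(u, v) \<in> A"
    unfolding out_nbrs_def by auto
  with C out_u obtain x where xv: "(x, v) \<in> A" and "x \<noteq> u"
    unfolding compressed_def in_nbrs_def by blast
  from G xv obtain p where p: "is_path A p" "hd p = s" "last p = x"
    unfolding st_dag_def by (meson SigmaD1 rtrancl_imp_is_path subsetD)
  then have "p \<noteq> []" by (simp add: is_path_def)
  with p xv have "is_path A (p @ [v])" "hd (p @ [v]) = s" "last (p @ [v]) = v"
    by (simp_all add: is_path_snoc)
  with uv have "u \<in> set p"
    unfolding s_dom_def by fastforce
  with p \<open>x \<noteq> u\<close> have "(u, x) \<in> A\<^sup>+"
    by (metis is_path_reaches_last rtranclD)
  then obtain z where "(u, z) \<in> A" "(z, x) \<in> A\<^sup>*"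
    by (meson tranclD)
  with out_u xv have "(v, v) \<in> A\<^sup>+"
    unfolding out_nbrs_def by (auto intro: rtrancl_into_trancl1)
  with G show False
    unfolding st_dag_def acyclic_def by blast
qed

lemma s_dom_successor:
  assumes ac: "acyclic A" and y_t: "(y, t) \<in> A\<^sup>*" and uy: "(u, y) \<in> A"
    and uv: "s_dom A s u v" "u \<noteq> v" and vu: "t_dom A t v u"
  shows "s_dom A s u y"
  unfolding s_dom_def
proof (intro allI impI)
  fix p
  assume p: "is_path A p \<and> hd p = s \<and> last p = y"
  obtain r where r: "is_path A r" "hd r = y" "last r = t"
    using rtrancl_imp_is_path[OF y_t] by blast
  then have "r \<noteq> []" by (simp add: is_path_def)
  with r uy have "is_path A (u # r)" "hd (u # r) = u" "last (u # r) = t"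
    by (simp_all add: is_path_Cons)
  with vu uv(2) have "v \<in> set r"
    unfolding t_dom_def by fastforce
  then obtain r' where r': "is_path A r'" "hd r' = y" "last r' = v" "set r' \<subseteq> set r"
    using is_path_prefix_to[OF r(1)] r(2) by blast
  have u_notin_r: "u \<notin> set r"
  proof
    assume "u \<in> set r"
    with r have "(y, u) \<in> A\<^sup>*" by (metis is_path_hd_reaches)
    with uy ac show False
      unfolding acyclic_def by (meson rtrancl_into_trancl2)
  qed
  from p r' have "is_path A (butlast p @ r')" "hd (butlast p @ r') = s" "last (butlast p @ r') = v"
    using is_path_join[of A p r'] by (simp_all add: is_path_def)
  with uv have "u \<in> set (butlast p @ r')"
    unfolding s_dom_def by blast
  with r' u_notin_r show "u \<in> set p"
    by (auto dest: in_set_butlastD)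
qed

lemma imm_s_dom_other_node:
  assumes G: "st_dag N A s t" and C: "compressed A"
    and S: "imm_s_dom N A s u v" and T: "imm_t_dom N A t v u"
  shows "\<exists>w. w \<noteq> v \<and> imm_s_dom N A s u w"
proof -
  from G have AN: "A \<subseteq> N \<times> N" and ac: "acyclic A" and "in_nbrs A s = {}"
    and reach_t: "\<forall>x \<in> N. (x, t) \<in> A\<^sup>*"
    unfolding st_dag_def by blast+
  from S have u: "u \<in> N" and uv: "s_dom A s u v" "u \<noteq> v"
    unfolding imm_s_dom_def by auto
  from T have "u \<noteq> t" and vu: "t_dom A t v u"
    unfolding imm_t_dom_def by auto
  obtain y where uy: "(u, y) \<in> A" and "y \<noteq> v"
    using s_dom_has_other_successor[OF G C uv u \<open>u \<noteq> t\<close>] by blast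
  have y: "y \<in> N" "y \<noteq> s" "u \<noteq> y"
    using uy AN \<open>in_nbrs A s = {}\<close> ac unfolding in_nbrs_def acyclic_def by auto
  have "s_dom A s u y"
    using s_dom_successor[OF ac _ uy uv vu] reach_t y(1) by blast
  moreover have "s_dom A s w u" if "w \<noteq> y" "s_dom A s w y" for w
    using s_dom_arc_source[OF uy] that by blast
  ultimately have "imm_s_dom N A s u y"
    unfolding imm_s_dom_def using u y by blast
  with \<open>y \<noteq> v\<close> show ?thesis by blast
qed

theorem lemma4:
  fixes N :: "'a set" and A :: "('a \<times> 'a) set" and s t u v :: 'a
  assumes "st_dag N A s t"
    and "compressed A"
    and "u \<in> N" and "v \<in> N" and "u \<noteq> v"
    and "imm_s_dom N A s u v"
    and "imm_t_dom N A t v u"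
  shows "(\<exists>w. w \<noteq> v \<and> imm_s_dom N A s u w) \<and> (\<exists>w. w \<noteq> u \<and> imm_t_dom N A t v w)"
proof
  show "\<exists>w. w \<noteq> v \<and> imm_s_dom N A s u w"
    using imm_s_dom_other_node[OF assms(1,2,6,7)] .
  have "imm_s_dom N (A\<inverse>) t v u" and "imm_t_dom N (A\<inverse>) s u v"
    using assms(6,7) unfolding imm_t_dom_iff_imm_s_dom_converse by simp_all
  then obtain w where "w \<noteq> u" "imm_s_dom N (A\<inverse>) t v w"
    using imm_s_dom_other_node[OF st_dag_converse[OF assms(1)] compressed_converse[OF assms(2)]]
    by blast
  then show "\<exists>w. w \<noteq> u \<and> imm_t_dom N A t v w"
    unfolding imm_t_dom_iff_imm_s_dom_converse by blast
qed

end
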